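(* Let $A$ be a vertex of finite height in a monotonous quiver $\mathcal O$. Then for every vertex $B$ of the clade $\mathcal O_A$ we have $\infty>h(B)\ge h(A)$ and $h_A(B)\ge h(B)-h(A)$, where $h$ and $h_A$ denote heights in $\mathcal O$ and in $\mathcal O_A$, respectively.
   Context: A quiver consists of a class of vertices and, for each ordered pair of vertices $(A,B)$, a set of edges $A\to B$ (loops and multiple edges allowed). An evolution of length $m\ge 0$ is a sequence $A_0\leftarrow A_1\leftarrow\cdots\leftarrow A_m$ of vertices together with edges $A_k\to A_{k-1}$ ($1\le k\le m$); $A_0$ is its initial and $A_m$ its terminal vertex. Write $A\le B$ ($A$ is an ancestor of $B$, $B$ a descendant of $A$) if there is an evolution with initial vertex $A$ and terminal vertex $B$; $A,B$ are isotypic if $A\le B$ and $B\le A$. A vertex $A$ is primitive if every ancestor of $A$ is isotypic to $A$. A full evolution for $X$ is an evolution with primitive initial vertex and terminal vertex $X$. The height of $X$ is the smallest length of a full evolution for $X$ ($\infty$ if none). A quiver is monotonous if $h(A)\ge h(B)$ for every edge $A\to B$. The clade $\mathcal O_A$ of a vertex $A$ is the quiver formed by all descendants of $A$ in $\mathcal O$ and all edges of $\mathcal O$ between them (primitivity and height in $\mathcal O_A$ are computed within $\mathcal O_A$). *)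

theory Defs
  imports Main "HOL-Library.Extended_Nat"
begin

text \<open>A quiver is given by a vertex set V and, for each ordered pair of vertices (A,B),
  a set of edges E A B from A to B (only pairs of vertices in V are relevant).\<close>

definition evolution :: "'v set \<Rightarrow> ('v \<Rightarrow> 'v \<Rightarrow> 'e set) \<Rightarrow> (nat \<Rightarrow> 'v) \<Rightarrow> nat \<Rightarrow> bool" where
  "evolution V E a m \<longleftrightarrow> (\<forall>k\<le>m. a k \<in> V) \<and> (\<forall>k\<in>{1..m}. E (a k) (a (k - 1)) \<noteq> {})"

definition ancestor :: "'v set \<Rightarrow> ('v \<Rightarrow> 'v \<Rightarrow> 'e set) \<Rightarrow> 'v \<Rightarrow> 'v \<Rightarrow> bool" where
  "ancestor V E A B \<longleftrightarrow> (\<exists>a m. evolution V E a m \<and> a 0 = A \<and> a m = B)"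

definition isotypic :: "'v set \<Rightarrow> ('v \<Rightarrow> 'v \<Rightarrow> 'e set) \<Rightarrow> 'v \<Rightarrow> 'v \<Rightarrow> bool" where
  "isotypic V E A B \<longleftrightarrow> ancestor V E A B \<and> ancestor V E B A"

definition primitive :: "'v set \<Rightarrow> ('v \<Rightarrow> 'v \<Rightarrow> 'e set) \<Rightarrow> 'v \<Rightarrow> bool" where
  "primitive V E A \<longleftrightarrow> A \<in> V \<and> (\<forall>B. ancestor V E B A \<longrightarrow> isotypic V E B A)"

definition full_evolution :: "'v set \<Rightarrow> ('v \<Rightarrow> 'v \<Rightarrow> 'e set) \<Rightarrow> (nat \<Rightarrow> 'v) \<Rightarrow> nat \<Rightarrow> 'v \<Rightarrow> bool" where
  "full_evolution V E a m X \<longleftrightarrow> evolution V E a m \<and> primitive V E (a 0) \<and> a m = X"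

text \<open>Height: least length of a full evolution; \<infinity> (= Inf of the empty set) if none.\<close>
definition height :: "'v set \<Rightarrow> ('v \<Rightarrow> 'v \<Rightarrow> 'e set) \<Rightarrow> 'v \<Rightarrow> enat" where
  "height V E X = (INF m \<in> {m. \<exists>a. full_evolution V E a m X}. enat m)"

definition monotonous :: "'v set \<Rightarrow> ('v \<Rightarrow> 'v \<Rightarrow> 'e set) \<Rightarrow> bool" where
  "monotonous V E \<longleftrightarrow> (\<forall>A\<in>V. \<forall>B\<in>V. E A B \<noteq> {} \<longrightarrow> height V E A \<ge> height V E B)"

definition clade_vertices :: "'v set \<Rightarrow> ('v \<Rightarrow> 'v \<Rightarrow> 'e set) \<Rightarrow> 'v \<Rightarrow> 'v set" where
  "clade_vertices V E A = {B. ancestor V E A B}"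

definition clade_edges :: "'v set \<Rightarrow> ('v \<Rightarrow> 'v \<Rightarrow> 'e set) \<Rightarrow> 'v \<Rightarrow> 'v \<Rightarrow> 'v \<Rightarrow> 'e set" where
  "clade_edges V E A B C =
     (if B \<in> clade_vertices V E A \<and> C \<in> clade_vertices V E A then E B C else {})"

end

theory Submission
  imports Defs
begin

text \<open>A full evolution of \<open>B\<close> inside the clade \<open>\<O>\<^sub>A\<close> starts at a vertex \<open>P\<close> that is primitive
  in the clade. Since \<open>A\<close> is an ancestor of \<open>P\<close> in the clade, primitivity makes \<open>P\<close> an ancestor
  of \<open>A\<close>, so monotonicity gives \<open>h(P) \<le> h(A)\<close>. Prepending a shortest full evolution of \<open>P\<close>
  in \<open>\<O>\<close> yields \<open>h(B) \<le> h(A) + h\<^sub>A(B)\<close>. The remaining claims follow from monotonicity along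
  an evolution from \<open>A\<close> to \<open>B\<close> and from appending it to a shortest full evolution of \<open>A\<close>.\<close>

lemma evolution_append:
  assumes a: "evolution V E a m" and b: "evolution V E b n" and "a m = b 0"
  shows "evolution V E (\<lambda>k. if k \<le> m then a k else b (k - m)) (m + n)"
  unfolding evolution_def
proof (intro conjI allI impI ballI)
  fix k assume "k \<le> m + n"
  then show "(if k \<le> m then a k else b (k - m)) \<in> V"
    using a b by (auto simp: evolution_def)
next
  fix k assume k: "k \<in> {1..m + n}"
  consider "k \<le> m" | "k = Suc m" | "Suc m < k" by linarith
  then show "E (if k \<le> m then a k else b (k - m))
               (if k - 1 \<le> m then a (k - 1) else b (k - 1 - m)) \<noteq> {}"
  proof cases
    case 1
    with k a show ?thesis by (auto simp: evolution_def)
  next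
    case 2
    with k have "1 \<in> {1..n}" by simp
    with 2 b \<open>a m = b 0\<close> show ?thesis unfolding evolution_def by fastforce
  next
    case 3
    with k have "k - m \<in> {1..n}" by auto
    with b have "E (b (k - m)) (b (k - m - 1)) \<noteq> {}"
      unfolding evolution_def by blast
    moreover from 3 have "\<not> k - 1 \<le> m" "k - 1 - m = k - m - 1" by auto
    ultimately show ?thesis using 3 by simp
  qed
qed

lemma evolution_prefix: "evolution V E a m \<Longrightarrow> j \<le> m \<Longrightarrow> evolution V E a j"
  unfolding evolution_def by auto

lemma height_le_full_evolution: "full_evolution V E a m X \<Longrightarrow> height V E X \<le> enat m"
  unfolding height_def by (rule INF_lower2[of m]) auto

lemma full_evolution_of_height:
  assumes "height V E X < \<infinity>"
  obtains a m where "full_evolution V E a m X" "height V E X = enat m"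
proof -
  let ?S = "enat ` {m. \<exists>a. full_evolution V E a m X}"
  have "?S \<noteq> {}"
  proof
    assume "?S = {}"
    with assms show False
      unfolding height_def by (simp add: top_enat_def)
  qed
  then have "Inf ?S \<in> ?S"
    by (auto intro: wellorder_InfI)
  then show thesis
    using that unfolding height_def by auto
qed

lemma height_evolution_le:
  assumes b: "evolution V E b k"
  shows "height V E (b k) \<le> height V E (b 0) + enat k"
proof (cases "height V E (b 0) < \<infinity>")
  case True
  then obtain d n where d: "full_evolution V E d n (b 0)" "height V E (b 0) = enat n"
    by (rule full_evolution_of_height)
  then have "full_evolution V E (\<lambda>j. if j \<le> n then d j else b (j - n)) (n + k) (b k)"
    using evolution_append[of V E d n b k] b by (auto simp: full_evolution_def)
  then show ?thesis
    using height_le_full_evolution d(2) by fastforce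
qed simp

lemma height_finite_descendant:
  assumes "ancestor V E X Y" "height V E X < \<infinity>"
  shows "height V E Y < \<infinity>"
proof -
  obtain b k where "evolution V E b k" "b 0 = X" "b k = Y"
    using assms(1) unfolding ancestor_def by blast
  then have "height V E Y \<le> height V E X + enat k"
    using height_evolution_le by metis
  also have "\<dots> < \<infinity>"
    using assms(2) by (cases "height V E X") auto
  finally show ?thesis .
qed

lemma monotonous_height_evolution:
  assumes "monotonous V E" "evolution V E a m" "k \<le> m"
  shows "height V E (a 0) \<le> height V E (a k)"
  using assms(3)
proof (induction k)
  case (Suc k)
  then have "E (a (Suc k)) (a k) \<noteq> {}" "a k \<in> V" "a (Suc k) \<in> V"
    using assms(2) unfolding evolution_def by (auto dest: bspec[of _ _ "Suc k"])
  with assms(1) have "height V E (a k) \<le> height V E (a (Suc k))"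
    unfolding monotonous_def by blast
  with Suc show ?case by simp
qed simp

lemma monotonous_height_mono:
  "monotonous V E \<Longrightarrow> ancestor V E X Y \<Longrightarrow> height V E X \<le> height V E Y"
  unfolding ancestor_def using monotonous_height_evolution by blast

lemma clade_vertices_subset: "clade_vertices V E A \<subseteq> V"
  unfolding clade_vertices_def ancestor_def evolution_def by force

lemma evolution_clade_imp_evolution:
  "evolution (clade_vertices V E A) (clade_edges V E A) c m \<Longrightarrow> evolution V E c m"
  using clade_vertices_subset unfolding evolution_def clade_edges_def
  by (fastforce split: if_splits)

lemma ancestor_clade_root:
  assumes "ancestor V E A P"
  shows "ancestor (clade_vertices V E A) (clade_edges V E A) A P"
proof -
  obtain a n where a: "evolution V E a n" "a 0 = A" "a n = P"
    using assms unfolding ancestor_def by blast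
  have "a k \<in> clade_vertices V E A" if "k \<le> n" for k
    unfolding clade_vertices_def ancestor_def using evolution_prefix[OF a(1) that] a(2) by blast
  with a(1) have "evolution (clade_vertices V E A) (clade_edges V E A) a n"
    unfolding evolution_def clade_edges_def by auto
  with a show ?thesis unfolding ancestor_def by blast
qed

lemma primitive_clade_imp_ancestor_root:
  assumes "primitive (clade_vertices V E A) (clade_edges V E A) P"
  shows "ancestor V E P A"
proof -
  have "P \<in> clade_vertices V E A"
    using assms unfolding primitive_def by (rule conjunct1)
  then have "ancestor V E A P"
    unfolding clade_vertices_def by simp
  from ancestor_clade_root[OF this] assms
  have "isotypic (clade_vertices V E A) (clade_edges V E A) A P"
    unfolding primitive_def by blast
  then have "ancestor (clade_vertices V E A) (clade_edges V E A) P A"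
    unfolding isotypic_def ..
  then obtain e j where e: "evolution (clade_vertices V E A) (clade_edges V E A) e j" "e 0 = P" "e j = A"
    unfolding ancestor_def by blast
  from evolution_clade_imp_evolution[OF e(1)] e(2,3) show ?thesis
    unfolding ancestor_def by blast
qed

lemma enat_diff_le_of_le_add: "(a::enat) \<le> b + c \<Longrightarrow> b \<noteq> \<infinity> \<Longrightarrow> a - b \<le> c"
  by (cases a; cases b; cases c) auto

lemma height_le_height_add_clade_height:
  assumes "monotonous V E"
  shows "height V E B \<le> height V E A + height (clade_vertices V E A) (clade_edges V E A) B"
proof (cases "height (clade_vertices V E A) (clade_edges V E A) B < \<infinity>")
  case True
  then obtain c m where c: "full_evolution (clade_vertices V E A) (clade_edges V E A) c m B"
    and m: "height (clade_vertices V E A) (clade_edges V E A) B = enat m"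
    by (rule full_evolution_of_height)
  have "evolution V E c m"
    using c evolution_clade_imp_evolution unfolding full_evolution_def by metis
  moreover have "c m = B"
    using c unfolding full_evolution_def by blast
  ultimately have "height V E B \<le> height V E (c 0) + enat m"
    using height_evolution_le by metis
  moreover have "height V E (c 0) \<le> height V E A"
    using c monotonous_height_mono[OF assms primitive_clade_imp_ancestor_root]
    unfolding full_evolution_def by blast
  ultimately show ?thesis
    using m add_right_mono order_trans by metis
qed simp

theorem theorem9p3:
  fixes V :: "'v set" and E :: "'v \<Rightarrow> 'v \<Rightarrow> 'e set" and A :: 'v
  assumes "monotonous V E"
    and "A \<in> V"
    and "height V E A < \<infinity>"
  shows "\<forall>B \<in> clade_vertices V E A.
           height V E B < \<infinity> \<and> height V E B \<ge> height V E A \<and>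
           height (clade_vertices V E A) (clade_edges V E A) B \<ge> height V E B - height V E A"
proof
  fix B assume "B \<in> clade_vertices V E A"
  then have anc: "ancestor V E A B"
    by (simp add: clade_vertices_def)
  have "height V E B < \<infinity>"
    using height_finite_descendant[OF anc assms(3)] .
  moreover have "height V E A \<le> height V E B"
    using monotonous_height_mono[OF assms(1) anc] .
  moreover have "height V E B - height V E A \<le> height (clade_vertices V E A) (clade_edges V E A) B"
    using assms(3) by (intro enat_diff_le_of_le_add height_le_height_add_clade_height assms(1)) simp
  ultimately show "height V E B < \<infinity> \<and> height V E B \<ge> height V E A \<and>
           height (clade_vertices V E A) (clade_edges V E A) B \<ge> height V E B - height V E A"
    by blast
qed

end
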